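(* Let $\langle x_n\rangle$ be a cofinally Bourbaki quasi-Cauchy sequence of distinct terms in a metric space $\langle X,d\rangle$. Then there exists a pairwise disjoint family $\{M_j: j\in\mathbb{N}\}$ of infinite subsets of $\mathbb{N}$ such that for every $j\in\mathbb{N}$ and all $i,\ell\in M_j$, the points $x_i$ and $x_\ell$ can be joined by a $\frac1j$-chain.
   Context: For $\varepsilon>0$, an $\varepsilon$-chain joining $x,y\in X$ is a finite sequence $x=u_0,u_1,\dots,u_n=y$ in $X$ with $d(u_{i-1},u_i)<\varepsilon$ for all $i$. A sequence $\langle x_n\rangle$ in $X$ is cofinally Bourbaki quasi-Cauchy if for every $\varepsilon>0$ there is an infinite set $N_\varepsilon\subseteq\mathbb{N}$ such that for all $j,k\in N_\varepsilon$, $x_j$ and $x_k$ can be joined by an $\varepsilon$-chain. *)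

theory Defs
  imports "HOL-Analysis.Analysis"
begin

definition eps_chain :: "real \<Rightarrow> 'a::metric_space \<Rightarrow> 'a \<Rightarrow> bool" where
  "eps_chain e x y \<longleftrightarrow>
     (\<exists>us::'a list. us \<noteq> [] \<and> hd us = x \<and> last us = y \<and>
        (\<forall>i. Suc i < length us \<longrightarrow> dist (us ! i) (us ! Suc i) < e))"

definition cofinally_bourbaki_quasi_cauchy :: "(nat \<Rightarrow> 'a::metric_space) \<Rightarrow> bool" where
  "cofinally_bourbaki_quasi_cauchy x \<longleftrightarrow>
     (\<forall>e>0. \<exists>N::nat set. infinite N \<and> (\<forall>j\<in>N. \<forall>k\<in>N. eps_chain e (x j) (x k)))"

end

theory Submission
  imports Defs
begin

text \<open>For each \<open>j \<ge> 1\<close> the hypothesis yields an infinite set \<open>N\<^sub>j\<close> of indices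
  pairwise joinable by \<open>1/j\<close>-chains; it remains to shrink the \<open>N\<^sub>j\<close> to pairwise disjoint
  infinite sets. Enumerate the pairs \<open>(j, k)\<close> by the Cantor pairing and choose a strictly
  increasing sequence \<open>a\<close> with \<open>a\<langle>j,k\<rangle> \<in> N\<^sub>j\<close>; then \<open>M\<^sub>j = {a\<langle>j,k\<rangle> | k}\<close> works,
  disjointness coming from injectivity of \<open>a\<close> and of the pairing.\<close>

lemma strict_mono_choice:
  fixes S :: "nat \<Rightarrow> nat set"
  assumes "\<And>n. infinite (S n)"
  shows "\<exists>a. strict_mono a \<and> (\<forall>n. a n \<in> S n)"
proof -
  have "\<exists>t. t \<in> S 0"
    using assms[of 0] by (metis finite.emptyI ex_in_conv)
  moreover have "\<exists>u. u \<in> S (Suc n) \<and> t < u" for t n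
    using assms[of "Suc n"] unfolding infinite_nat_iff_unbounded by blast
  ultimately obtain a where "\<forall>n. a n \<in> S n \<and> a n < a (Suc n)"
    using dependent_nat_choice[where P = "\<lambda>n t. t \<in> S n" and Q = "\<lambda>_ t u. t < u"] by blast
  then show ?thesis
    by (metis strict_monoI_Suc)
qed

lemma disjoint_infinite_subsets:
  fixes N :: "nat \<Rightarrow> nat set"
  assumes "\<And>j. infinite (N j)"
  shows "\<exists>M. disjoint_family M \<and> (\<forall>j. infinite (M j) \<and> M j \<subseteq> N j)"
proof -
  obtain a where a: "strict_mono a" and a_in: "\<And>n. a n \<in> N (fst (prod_decode n))"
    using strict_mono_choice[of "\<lambda>n. N (fst (prod_decode n))"] assms by blast
  define M where "M j = range (\<lambda>k. a (prod_encode (j, k)))" for j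
  have inj_a: "inj a"
    using a by (rule strict_mono_imp_inj_on)
  have "disjoint_family M"
    unfolding disjoint_family_on_def M_def
    by (auto simp: inj_eq[OF inj_a] prod_encode_eq)
  moreover have "infinite (M j)" for j
  proof -
    have "inj (\<lambda>k. a (prod_encode (j, k)))"
      by (rule injI) (simp add: inj_eq[OF inj_a] prod_encode_eq)
    then show ?thesis
      unfolding M_def by (rule range_inj_infinite)
  qed
  moreover have "M j \<subseteq> N j" for j
    using a_in[of "prod_encode (j, _)"] by (auto simp: M_def)
  ultimately show ?thesis
    by blast
qed

theorem mainTheorem3:
  fixes x :: "nat \<Rightarrow> 'a::metric_space"
  assumes "cofinally_bourbaki_quasi_cauchy x"
    and "inj x"
  shows "\<exists>M :: nat \<Rightarrow> nat set.
           disjoint_family_on M {1..} \<and>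
           (\<forall>j\<ge>1. infinite (M j)) \<and>
           (\<forall>j\<ge>1. \<forall>i\<in>M j. \<forall>l\<in>M j. eps_chain (1 / real j) (x i) (x l))"
proof -
  have "\<exists>N. infinite N \<and> (j \<ge> 1 \<longrightarrow> (\<forall>a\<in>N. \<forall>b\<in>N. eps_chain (1 / real j) (x a) (x b)))"
    for j :: nat
  proof (cases "j \<ge> 1")
    case True
    then show ?thesis
      using assms(1) unfolding cofinally_bourbaki_quasi_cauchy_def by simp
  next
    case False
    then show ?thesis
      by (intro exI[of _ UNIV]) simp
  qed
  then obtain N where N_infinite: "\<And>j. infinite (N j)"
    and N_chain: "\<And>j a b. j \<ge> 1 \<Longrightarrow> a \<in> N j \<Longrightarrow> b \<in> N j \<Longrightarrow> eps_chain (1 / real j) (x a) (x b)"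
    by metis
  obtain M where "disjoint_family M" "\<And>j. infinite (M j)" "\<And>j. M j \<subseteq> N j"
    using disjoint_infinite_subsets[of N, OF N_infinite] by blast
  then show ?thesis
    using N_chain disjoint_family_on_mono[of "{1..}" UNIV M] by blast
qed

end
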